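(* If $M_C$ is a semi-positive or semi-negative mixed cycle of arbitrary order $n\ge3$, or a negative mixed cycle of even order, then $\rho(M_C)<2$.
   Context: A mixed graph is obtained from a finite simple graph by orienting some of its edges. With $\omega=\frac{1+\mathbf{i}\sqrt3}{2}$, the matrix $N=(n_{st})$ has entry $\omega$ for an arc from $u_s$ to $u_t$, $\bar\omega$ for an arc from $u_t$ to $u_s$, $1$ for an undirected edge, $0$ otherwise; $\rho$ is the maximum absolute value of an eigenvalue of $N$. A mixed cycle has underlying graph a cycle $v_1\cdots v_nv_1$ and weight $n_{12}\cdots n_{n1}$; it is negative if the weight is $-1$, semi-positive if it is $\omega$ or $\bar\omega$, semi-negative if it is $-\omega$ or $-\bar\omega$. *)

theory Defs
  imports "Jordan_Normal_Form.Spectral_Radius"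
begin

text \<open>The sixth root of unity omega = (1 + i sqrt 3)/2.\<close>
definition omega :: complex where
  "omega = Complex (1/2) (sqrt 3 / 2)"

text \<open>A mixed graph on vertex set {0..<n}: U is the (symmetric) undirected-edge relation,
  A s t means there is an arc from s to t.\<close>
definition mixed_graph :: "nat \<Rightarrow> (nat \<Rightarrow> nat \<Rightarrow> bool) \<Rightarrow> (nat \<Rightarrow> nat \<Rightarrow> bool) \<Rightarrow> bool" where
  "mixed_graph n U A \<longleftrightarrow>
     (\<forall>s t. U s t \<longrightarrow> s < n \<and> t < n \<and> s \<noteq> t \<and> U t s) \<and>
     (\<forall>s t. A s t \<longrightarrow> s < n \<and> t < n \<and> s \<noteq> t \<and> \<not> A t s \<and> \<not> U s t)"

text \<open>Entry of the Hermitian adjacency matrix of the second kind.\<close>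
definition mixed_entry :: "(nat \<Rightarrow> nat \<Rightarrow> bool) \<Rightarrow> (nat \<Rightarrow> nat \<Rightarrow> bool) \<Rightarrow> nat \<Rightarrow> nat \<Rightarrow> complex" where
  "mixed_entry U A s t =
     (if A s t then omega else if A t s then cnj omega else if U s t then 1 else 0)"

definition herm_N :: "nat \<Rightarrow> (nat \<Rightarrow> nat \<Rightarrow> bool) \<Rightarrow> (nat \<Rightarrow> nat \<Rightarrow> bool) \<Rightarrow> complex mat" where
  "herm_N n U A = mat n n (\<lambda>(s, t). mixed_entry U A s t)"

definition underlying_adj :: "(nat \<Rightarrow> nat \<Rightarrow> bool) \<Rightarrow> (nat \<Rightarrow> nat \<Rightarrow> bool) \<Rightarrow> nat \<Rightarrow> nat \<Rightarrow> bool" where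
  "underlying_adj U A s t \<longleftrightarrow> U s t \<or> A s t \<or> A t s"

definition mixed_cycle :: "nat \<Rightarrow> (nat \<Rightarrow> nat \<Rightarrow> bool) \<Rightarrow> (nat \<Rightarrow> nat \<Rightarrow> bool) \<Rightarrow> bool" where
  "mixed_cycle n U A \<longleftrightarrow> 3 \<le> n \<and> mixed_graph n U A \<and>
     (\<forall>s<n. \<forall>t<n. underlying_adj U A s t \<longleftrightarrow> (t = Suc s mod n \<or> s = Suc t mod n))"

definition cycle_weight :: "nat \<Rightarrow> (nat \<Rightarrow> nat \<Rightarrow> bool) \<Rightarrow> (nat \<Rightarrow> nat \<Rightarrow> bool) \<Rightarrow> complex" where
  "cycle_weight n U A = (\<Prod>i<n. mixed_entry U A i (Suc i mod n))"

definition negative_cycle where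
  "negative_cycle n U A \<longleftrightarrow> cycle_weight n U A = -1"
definition semi_positive_cycle where
  "semi_positive_cycle n U A \<longleftrightarrow> cycle_weight n U A = omega \<or> cycle_weight n U A = cnj omega"
definition semi_negative_cycle where
  "semi_negative_cycle n U A \<longleftrightarrow> cycle_weight n U A = - omega \<or> cycle_weight n U A = - cnj omega"

end

theory Submission imports Defs begin

text \<open>Let \<open>N v = \<lambda> v\<close> with \<open>\<bar>\<lambda>\<bar> \<ge> 2\<close>. Row \<open>i\<close> reads
  \<open>\<lambda> v\<^sub>i = c\<^sub>i v\<^sub>i\<^sub>+\<^sub>1 + cnj c\<^sub>i\<^sub>-\<^sub>1 v\<^sub>i\<^sub>-\<^sub>1\<close> with unimodular edge weights \<open>c\<^sub>i\<close>.
  At an index where \<open>\<bar>v\<^sub>i\<bar>\<close> is maximal the triangle inequality is tight, so both summands equal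
  \<open>\<lambda>/2 v\<^sub>i\<close> and \<open>\<bar>v\<^sub>i\<^sub>+\<^sub>1\<bar>\<close> is maximal as well; going around the cycle,
  \<open>c\<^sub>i v\<^sub>i\<^sub>+\<^sub>1 = \<lambda>/2 v\<^sub>i\<close> for all \<open>i\<close>, and the backward equation gives \<open>(\<lambda>/2)\<^sup>2 = 1\<close>.
  Multiplying over the cycle, the weight is \<open>(\<lambda>/2)\<^sup>n\<close>, i.e. \<open>1\<close>, or \<open>-1\<close> with \<open>n\<close> odd;
  in particular it is real, unlike \<open>\<plusminus>\<omega>\<close> and \<open>\<plusminus>cnj \<omega>\<close>.\<close>

lemma complex_eq_if_cmod_add_ge:
  fixes a b :: complex
  assumes "cmod a \<le> m" "cmod b \<le> m" "2 * m \<le> cmod (a + b)"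
  shows "a = b"
proof -
  have "(cmod (a + b))\<^sup>2 + (cmod (a - b))\<^sup>2 = 2 * (cmod a)\<^sup>2 + 2 * (cmod b)\<^sup>2"
    unfolding cmod_power2 by (simp add: power2_eq_square algebra_simps)
  moreover have "(cmod a)\<^sup>2 \<le> m\<^sup>2" "(cmod b)\<^sup>2 \<le> m\<^sup>2"
    using assms(1,2) norm_ge_zero by (smt (verit) power_mono)+
  moreover have "4 * m\<^sup>2 \<le> (cmod (a + b))\<^sup>2"
    using power_mono[OF assms(3), of 2] assms(1) norm_ge_zero[of a] by (simp add: power_mult_distrib)
  ultimately have "(cmod (a - b))\<^sup>2 \<le> 0"
    by linarith
  then show ?thesis by simp
qed

lemma Suc_mod_eq_iff_eq_pred_mod:
  fixes i j n :: nat
  assumes "i < n" "j < n"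
  shows "Suc j mod n = i \<longleftrightarrow> j = (i + n - 1) mod n"
  using assms by (cases "Suc j < n"; cases i) (auto simp: mod_if)

lemma Suc_mod_neq_pred_mod:
  fixes i n :: nat
  assumes "3 \<le> n" "i < n"
  shows "Suc i mod n \<noteq> (i + n - 1) mod n"
  using assms by (cases "Suc i < n"; cases i) (auto simp: mod_if)

lemma prod_lessThan_Suc_mod:
  "(\<Prod>i<n. f (Suc i mod n)) = (\<Prod>i<n. f i)"
proof (cases n)
  case (Suc m)
  have "(\<Prod>i<Suc m. f (Suc i mod Suc m)) = (\<Prod>i<m. f (Suc i)) * f 0"
    by (simp add: prod.lessThan_Suc)
  also have "\<dots> = (\<Prod>i<Suc m. f i)"
    by (subst prod.lessThan_Suc_shift) (simp add: mult.commute)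
  finally show ?thesis using Suc by simp
qed simp

locale large_cycle_eigenpair =
  fixes n :: nat and c v :: "nat \<Rightarrow> complex" and l :: complex
  assumes n_pos: "0 < n"
    and cmod_weight: "\<And>i. i < n \<Longrightarrow> cmod (c i) = 1"
    and eigen_eq: "\<And>i. i < n \<Longrightarrow>
      l * v i = c i * v (Suc i mod n) + cnj (c ((i + n - 1) mod n)) * v ((i + n - 1) mod n)"
    and eigenvector_nonzero: "\<exists>i<n. v i \<noteq> 0"
    and cmod_eigenvalue_ge: "2 \<le> cmod l"
begin

definition max_cmod :: real where
  "max_cmod = Max ((\<lambda>i. cmod (v i)) ` {..<n})"

lemma cmod_le_max_cmod: "i < n \<Longrightarrow> cmod (v i) \<le> max_cmod"
  unfolding max_cmod_def by simp

lemma max_cmod_attained: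
  obtains i where "i < n" "cmod (v i) = max_cmod"
  using Max_in[of "(\<lambda>i. cmod (v i)) ` {..<n}"] n_pos unfolding max_cmod_def by fastforce

lemma max_cmod_pos: "0 < max_cmod"
proof -
  obtain i where "i < n" "v i \<noteq> 0" using eigenvector_nonzero by blast
  then show ?thesis using cmod_le_max_cmod[of i] by (smt (verit) zero_less_norm_iff)
qed

lemma max_cmod_propagates:
  assumes "i < n" "cmod (v i) = max_cmod"
  shows "c i * v (Suc i mod n) = l / 2 * v i" "cmod (v (Suc i mod n)) = max_cmod"
proof -
  define a where "a = c i * v (Suc i mod n)"
  define b where "b = cnj (c ((i + n - 1) mod n)) * v ((i + n - 1) mod n)"
  have cmod_a: "cmod a = cmod (v (Suc i mod n))"
    unfolding a_def using assms(1) by (simp add: norm_mult cmod_weight)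
  have cmod_b: "cmod b = cmod (v ((i + n - 1) mod n))"
    unfolding b_def using n_pos by (simp add: norm_mult cmod_weight)
  have "2 * max_cmod \<le> cmod l * max_cmod"
    using cmod_eigenvalue_ge max_cmod_pos by simp
  also have "\<dots> = cmod (a + b)"
    using eigen_eq[OF assms(1)] assms(2) unfolding a_def b_def by (metis norm_mult)
  finally have "a = b"
    using cmod_a cmod_b cmod_le_max_cmod n_pos
    by (intro complex_eq_if_cmod_add_ge[of _ max_cmod]) auto
  then have a_eq: "a = l / 2 * v i"
    using eigen_eq[OF assms(1)] unfolding a_def b_def by simp
  then show "c i * v (Suc i mod n) = l / 2 * v i" unfolding a_def .
  have "max_cmod \<le> cmod l / 2 * max_cmod"
    using cmod_eigenvalue_ge max_cmod_pos by simp
  also have "\<dots> = cmod (v (Suc i mod n))"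
    using arg_cong[OF a_eq, of cmod] cmod_a assms(2) by (simp add: norm_mult norm_divide)
  finally show "cmod (v (Suc i mod n)) = max_cmod"
    using cmod_le_max_cmod n_pos by (simp add: antisym)
qed

lemma cmod_eq_max_cmod:
  assumes "j < n"
  shows "cmod (v j) = max_cmod"
proof -
  obtain i where i: "i < n" "cmod (v i) = max_cmod" by (rule max_cmod_attained)
  have "cmod (v ((i + k) mod n)) = max_cmod" for k
  proof (induction k)
    case (Suc k)
    then show ?case
      using max_cmod_propagates(2)[of "(i + k) mod n"] n_pos by (simp add: mod_Suc_eq)
  qed (use i in simp)
  from this[of "n - i + j"] show ?thesis using i(1) assms by simp
qed

lemma weighted_succ_eq: "i < n \<Longrightarrow> c i * v (Suc i mod n) = l / 2 * v i"
  using max_cmod_propagates(1) cmod_eq_max_cmod by blast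

lemma eigenvector_nth_nonzero: "i < n \<Longrightarrow> v i \<noteq> 0"
  using cmod_eq_max_cmod max_cmod_pos by fastforce

lemma half_eigenvalue_square: "(l / 2)\<^sup>2 = 1"
proof -
  define j where "j = Suc 0 mod n"
  have j: "j < n" "(j + n - 1) mod n = 0"
    unfolding j_def using n_pos Suc_mod_eq_iff_eq_pred_mod[of "Suc 0 mod n" n 0] by auto
  have forward: "c 0 * v j = l / 2 * v 0"
    using weighted_succ_eq[of 0] n_pos unfolding j_def by simp
  have backward: "cnj (c 0) * v 0 = l / 2 * v j"
    using eigen_eq[OF j(1)] weighted_succ_eq[OF j(1)] j(2) by (simp add: field_simps)
  have "c 0 * cnj (c 0) = 1"
    using cmod_weight[of 0] n_pos complex_norm_square[of "c 0"] by simp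
  then have "v j * v 0 = (c 0 * v j) * (cnj (c 0) * v 0)"
    by (simp add: ac_simps)
  also have "\<dots> = (l / 2)\<^sup>2 * (v j * v 0)"
    unfolding forward backward by (simp add: power2_eq_square algebra_simps)
  finally show ?thesis
    using eigenvector_nth_nonzero j(1) n_pos by simp
qed

lemma prod_weights_eq_power: "(\<Prod>i<n. c i) = (l / 2) ^ n"
proof -
  have "(\<Prod>i<n. c i) * (\<Prod>i<n. v i) = (\<Prod>i<n. c i * v (Suc i mod n))"
    by (simp add: prod.distrib prod_lessThan_Suc_mod)
  also have "\<dots> = (\<Prod>i<n. l / 2 * v i)"
    by (rule prod.cong) (simp_all add: weighted_succ_eq)
  also have "\<dots> = (l / 2) ^ n * (\<Prod>i<n. v i)"
    by (subst prod.distrib) simp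
  finally show ?thesis
    using eigenvector_nth_nonzero by simp
qed

end

lemma cmod_omega: "cmod omega = 1"
  unfolding omega_def cmod_def by (simp add: power_divide)

lemma Im_omega: "Im omega = sqrt 3 / 2"
  unfolding omega_def by simp

lemma mixed_entry_swap:
  assumes "mixed_graph n U A"
  shows "mixed_entry U A t s = cnj (mixed_entry U A s t)"
  using assms unfolding mixed_graph_def mixed_entry_def by auto

lemma mixed_entry_eq_0:
  "\<not> underlying_adj U A s t \<Longrightarrow> mixed_entry U A s t = 0"
  unfolding underlying_adj_def mixed_entry_def by auto

lemma cmod_mixed_entry:
  assumes "mixed_graph n U A" "underlying_adj U A s t"
  shows "cmod (mixed_entry U A s t) = 1"
  using assms cmod_omega unfolding underlying_adj_def mixed_entry_def mixed_graph_def by auto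

lemma mixed_cycle_adj_iff:
  assumes "mixed_cycle n U A" "i < n" "j < n"
  shows "underlying_adj U A i j \<longleftrightarrow> j = Suc i mod n \<or> j = (i + n - 1) mod n"
proof -
  have "i = Suc j mod n \<longleftrightarrow> j = (i + n - 1) mod n"
    using Suc_mod_eq_iff_eq_pred_mod[OF assms(2,3)] by auto
  then show ?thesis
    using assms unfolding mixed_cycle_def by auto
qed

lemma mixed_cycle_mult_vec_nth:
  assumes cycle: "mixed_cycle n U A" and "i < n" "v \<in> carrier_vec n"
  shows "(herm_N n U A *\<^sub>v v) $ i =
     mixed_entry U A i (Suc i mod n) * v $ (Suc i mod n) +
     cnj (mixed_entry U A ((i + n - 1) mod n) (Suc ((i + n - 1) mod n) mod n)) * v $ ((i + n - 1) mod n)"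
proof -
  define succ where "succ = Suc i mod n"
  define pred where "pred = (i + n - 1) mod n"
  have n3: "3 \<le> n" and graph: "mixed_graph n U A"
    using cycle unfolding mixed_cycle_def by auto
  have neighbours: "succ < n" "pred < n" "succ \<noteq> pred"
    using Suc_mod_neq_pred_mod[OF n3 \<open>i < n\<close>] n3 unfolding succ_def pred_def by auto
  have succ_pred: "Suc pred mod n = i"
    using Suc_mod_eq_iff_eq_pred_mod[OF \<open>i < n\<close> neighbours(2)] unfolding pred_def by simp
  have "(herm_N n U A *\<^sub>v v) $ i = (\<Sum>j<n. mixed_entry U A i j * v $ j)"
    using assms unfolding herm_N_def by (simp add: scalar_prod_def atLeast0LessThan)
  also have "\<dots> = (\<Sum>j\<in>{succ, pred}. mixed_entry U A i j * v $ j)"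
    using neighbours mixed_cycle_adj_iff[OF cycle \<open>i < n\<close>] mixed_entry_eq_0
    unfolding succ_def pred_def by (intro sum.mono_neutral_right) auto
  also have "\<dots> = mixed_entry U A i succ * v $ succ + cnj (mixed_entry U A pred i) * v $ pred"
    using neighbours(3) mixed_entry_swap[OF graph, of pred i] by simp
  finally show ?thesis
    using succ_pred unfolding succ_def pred_def by simp
qed

lemma mixed_cycle_weight_if_large_eigenvalue:
  assumes cycle: "mixed_cycle n U A"
    and eigenvector: "eigenvector (herm_N n U A) v l" and "2 \<le> cmod l"
  shows "cycle_weight n U A = 1 \<or> cycle_weight n U A = -1 \<and> odd n"
proof -
  define c where "c i = mixed_entry U A i (Suc i mod n)" for i
  have n3: "3 \<le> n" and graph: "mixed_graph n U A"
    using cycle unfolding mixed_cycle_def by auto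
  have v: "v \<in> carrier_vec n" "v \<noteq> 0\<^sub>v n" "herm_N n U A *\<^sub>v v = l \<cdot>\<^sub>v v"
    using eigenvector unfolding eigenvector_def herm_N_def by auto
  interpret large_cycle_eigenpair n c "\<lambda>i. v $ i" l
  proof
    show "cmod (c i) = 1" if "i < n" for i
      unfolding c_def using that n3 cmod_mixed_entry[OF graph] mixed_cycle_adj_iff[OF cycle]
      by simp
    show "l * v $ i = c i * v $ (Suc i mod n) + cnj (c ((i + n - 1) mod n)) * v $ ((i + n - 1) mod n)"
      if "i < n" for i
      using mixed_cycle_mult_vec_nth[OF cycle that v(1)] v(3) carrier_vecD[OF v(1)] that
      unfolding c_def by simp
    show "\<exists>i<n. v $ i \<noteq> 0"
      using v(1,2) by (metis carrier_vecD eq_vecI index_zero_vec)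
  qed (use n3 \<open>2 \<le> cmod l\<close> in auto)
  have "l / 2 = 1 \<or> l / 2 = -1"
    using half_eigenvalue_square by (simp add: power2_eq_1_iff)
  then show ?thesis
    using prod_weights_eq_power unfolding cycle_weight_def c_def by (cases "even n") auto
qed

theorem lemma6p11:
  fixes n :: nat and U A :: "nat \<Rightarrow> nat \<Rightarrow> bool"
  assumes "mixed_cycle n U A"
    and "semi_positive_cycle n U A \<or> semi_negative_cycle n U A
         \<or> (negative_cycle n U A \<and> even n)"
  shows "spectral_radius (herm_N n U A) < 2"
proof (rule ccontr)
  assume large: "\<not> spectral_radius (herm_N n U A) < 2"
  have "herm_N n U A \<in> carrier_mat n n" "0 < n"
    using assms(1) unfolding herm_N_def mixed_cycle_def by auto
  then obtain l where l: "l \<in> spectrum (herm_N n U A)" "spectral_radius (herm_N n U A) = cmod l"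
    using spectral_radius_mem_max(1) by blast
  then obtain v where "eigenvector (herm_N n U A) v l"
    unfolding spectrum_def eigenvalue_def by auto
  moreover have "2 \<le> cmod l"
    using l(2) large by simp
  ultimately have "cycle_weight n U A = 1 \<or> cycle_weight n U A = -1 \<and> odd n"
    by (rule mixed_cycle_weight_if_large_eigenvalue[OF assms(1)])
  then have "Im (cycle_weight n U A) = 0" "negative_cycle n U A \<Longrightarrow> odd n"
    unfolding negative_cycle_def by auto
  then show False
    using assms(2) Im_omega unfolding semi_positive_cycle_def semi_negative_cycle_def by auto
qed

end
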